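(* Let $R$ be a ring and let $P$ be a polygon divided into subpolygons $P^1,\ldots,P^{\kappa+1}$ by the dissection $E=\{(t_1,v_1),(v_1,t_1),\ldots,(t_\kappa,v_\kappa),(v_\kappa,t_\kappa)\}$ for some $\kappa\geqslant0$. For each $\alpha$ let $c^\alpha:\operatorname{diag}P^\alpha\to R^*$ be a frieze, and assume $c^\alpha_{tv}=c^\beta_{tv}$ whenever $(t,v)\in E\cap\operatorname{diag}P^\alpha\cap\operatorname{diag}P^\beta$. Then there exists a unique map $c:\operatorname{diag}P\to R$ such that (i) $c|_{\operatorname{diag}P^\alpha}=c^\alpha$ for each $\alpha$, and (ii) $c$ is a weak frieze with respect to $E$. Moreover, if this $c$ takes all its values in $R^*$, then $c$ is a frieze.
   Context: $R^*$ denotes the invertible elements of $R$. A polygon $P$ is a finite set of at least three vertices with a cyclic ordering (thought of as a convex polygon in the plane); a subpolygon is a subset of at least three vertices with the induced cyclic ordering. $\operatorname{diag}P$ is the set of ordered pairs of distinct vertices (diagonals). A diagonal is an edge if its endpoints are neighbours, otherwise internal. $(i,k)$ and $(j,\ell)$ cross if $i,j,k,\ell$ are pairwise distinct with $i<j<k<\ell$ or $i<\ell<k<j$ cyclically. A dissection is a set of internal diagonals closed under reversal with no two crossing; it divides $P$ into the subpolygons whose edges are diagonals in the dissection or edges of $P$. Write $c_{ik}=c(i,k)$, $c_{xx}=0$. A map $c:\operatorname{diag}P\to R^*$ is a frieze if for all pairwise distinct $i,j,k$: $c_{ij}c_{kj}^{-1}c_{ki}=c_{ik}c_{jk}^{-1}c_{ji}$,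 and whenever $(i,k)$ and $(j,\ell)$ cross: $c_{ik}=c_{ij}c_{\ell j}^{-1}c_{\ell k}+c_{i\ell}c_{j\ell}^{-1}c_{jk}$. A map $c:\operatorname{diag}P\to R$ is a weak frieze with respect to a dissection $D$ if $c_{tv}\in R^*$ for $(t,v)\in D$ and whenever $(i,k)$ crosses $(t,v)$ with $(t,v),(v,t)\in D$, $c_{ik}=c_{it}c_{vt}^{-1}c_{vk}+c_{iv}c_{tv}^{-1}c_{tk}$. *)

theory Defs
  imports Main
begin

definition runit :: "'a::ring_1 \<Rightarrow> bool" where
  "runit x \<longleftrightarrow> (\<exists>y. x * y = 1 \<and> y * x = 1)"

definition rinv :: "'a::ring_1 \<Rightarrow> 'a" where
  "rinv x = (THE y. x * y = 1 \<and> y * x = 1)"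

(* A polygon is a finite set of at least three vertices of a linearly ordered
   type; its cyclic ordering is the one induced by the linear order.
   Subpolygons carry the induced cyclic ordering. *)
definition polygon :: "'v::linorder set \<Rightarrow> bool" where
  "polygon P \<longleftrightarrow> finite P \<and> 3 \<le> card P"

definition cyc3 :: "'v::linorder \<Rightarrow> 'v \<Rightarrow> 'v \<Rightarrow> bool" where
  "cyc3 a b c \<longleftrightarrow> (a < b \<and> b < c) \<or> (b < c \<and> c < a) \<or> (c < a \<and> a < b)"

definition cyc4 :: "'v::linorder \<Rightarrow> 'v \<Rightarrow> 'v \<Rightarrow> 'v \<Rightarrow> bool" where
  "cyc4 a b c d \<longleftrightarrow> (a < b \<and> b < c \<and> c < d) \<or> (b < c \<and> c < d \<and> d < a)
                   \<or> (c < d \<and> d < a \<and> a < b) \<or> (d < a \<and> a < b \<and> b < c)"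

definition diag :: "'v set \<Rightarrow> ('v \<times> 'v) set" where
  "diag P = {(i, k). i \<in> P \<and> k \<in> P \<and> i \<noteq> k}"

definition is_edge :: "'v::linorder set \<Rightarrow> 'v \<times> 'v \<Rightarrow> bool" where
  "is_edge P d \<longleftrightarrow> d \<in> diag P \<and>
     ((\<not> (\<exists>x\<in>P. cyc3 (fst d) x (snd d))) \<or> (\<not> (\<exists>x\<in>P. cyc3 (snd d) x (fst d))))"

definition internal :: "'v::linorder set \<Rightarrow> 'v \<times> 'v \<Rightarrow> bool" where
  "internal P d \<longleftrightarrow> d \<in> diag P \<and> \<not> is_edge P d"

definition crosses :: "'v::linorder \<times> 'v \<Rightarrow> 'v \<times> 'v \<Rightarrow> bool" where
  "crosses d e \<longleftrightarrow> (let i = fst d; k = snd d; j = fst e; l = snd e in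
     distinct [i, j, k, l] \<and> (cyc4 i j k l \<or> cyc4 i l k j))"

definition dissection :: "'v::linorder set \<Rightarrow> ('v \<times> 'v) set \<Rightarrow> bool" where
  "dissection P D \<longleftrightarrow> (\<forall>d\<in>D. internal P d) \<and> (\<forall>(a, b)\<in>D. (b, a) \<in> D)
      \<and> (\<forall>d\<in>D. \<forall>e\<in>D. \<not> crosses d e)"

(* Q is one of the subpolygons into which the dissection D divides P:
   every edge of Q is a diagonal in D or an edge of P, and no diagonal of D
   runs through the interior of Q. *)
definition piece :: "'v::linorder set \<Rightarrow> ('v \<times> 'v) set \<Rightarrow> 'v set \<Rightarrow> bool" where
  "piece P D Q \<longleftrightarrow> Q \<subseteq> P \<and> 3 \<le> card Q
      \<and> (\<forall>d. is_edge Q d \<longrightarrow> d \<in> D \<or> is_edge P d)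
      \<and> (\<forall>d\<in>D. d \<in> diag Q \<longrightarrow> is_edge Q d)"

definition frieze :: "'v::linorder set \<Rightarrow> ('v \<times> 'v \<Rightarrow> 'a::ring_1) \<Rightarrow> bool" where
  "frieze P c \<longleftrightarrow>
     (\<forall>d\<in>diag P. runit (c d))
   \<and> (\<forall>i\<in>P. \<forall>j\<in>P. \<forall>k\<in>P. distinct [i, j, k] \<longrightarrow>
        c (i, j) * rinv (c (k, j)) * c (k, i) = c (i, k) * rinv (c (j, k)) * c (j, i))
   \<and> (\<forall>i\<in>P. \<forall>j\<in>P. \<forall>k\<in>P. \<forall>l\<in>P. crosses (i, k) (j, l) \<longrightarrow>
        c (i, k) = c (i, j) * rinv (c (l, j)) * c (l, k) + c (i, l) * rinv (c (j, l)) * c (j, k))"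

definition weak_frieze :: "'v::linorder set \<Rightarrow> ('v \<times> 'v) set \<Rightarrow> ('v \<times> 'v \<Rightarrow> 'a::ring_1) \<Rightarrow> bool" where
  "weak_frieze P D c \<longleftrightarrow>
     (\<forall>d\<in>D. runit (c d))
   \<and> (\<forall>i\<in>P. \<forall>k\<in>P. \<forall>t v. (t, v) \<in> D \<and> (v, t) \<in> D \<and> crosses (i, k) (t, v) \<longrightarrow>
        c (i, k) = c (i, t) * rinv (c (v, t)) * c (v, k) + c (i, v) * rinv (c (t, v)) * c (t, k))"

end

theory Submission
  imports Defs
begin

(* Cutting along a diagonal (t,v) of E splits P into the arcs from t to v and from v to t, each
   dissected by the remaining diagonals of E, and every piece lies on one side. By induction on
   the number of diagonals, the maps on the two sides are glued; on the diagonals crossing (t,v)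
   the glued map is forced by the relation for (t,v), which also gives uniqueness. The relation
   for another diagonal of E follows by expanding first along (t,v) and then inside one side.
   If all values are units, the glued map is a frieze: relative to (t,v) it factors as
   c(i,k) = +-lam(i) (z(k) - z(i)) mu(k), and every map of this form is a frieze. *)

lemma rinv_eqI:
  fixes x y :: "'a::ring_1"
  assumes "x * y = 1" "y * x = 1"
  shows "rinv x = y"
proof -
  have "y' = y" if "x * y' = 1 \<and> y' * x = 1" for y'
  proof -
    have "y' = y' * (x * y)" using assms by simp
    also have "\<dots> = (y' * x) * y" by (simp add: mult.assoc)
    finally show "y' = y" using that by simp
  qed
  then show ?thesis unfolding rinv_def using assms by (intro the_equality) blast+
qed

lemma runit_inverse [simp]:
  fixes x :: "'a::ring_1"
  assumes "runit x"
  shows "x * rinv x = 1" "rinv x * x = 1"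
proof -
  obtain y where "x * y = 1" "y * x = 1" using assms unfolding runit_def by blast
  moreover from this have "rinv x = y" by (rule rinv_eqI)
  ultimately show "x * rinv x = 1" "rinv x * x = 1" by simp_all
qed

lemma runit_inverse_cancel [simp]:
  fixes x :: "'a::ring_1"
  assumes "runit x"
  shows "x * (rinv x * y) = y" "rinv x * (x * y) = y"
  using runit_inverse[OF assms] by (simp_all add: mult.assoc[symmetric])

lemma runit_rinv [simp]: "runit x \<Longrightarrow> runit (rinv x)"
  using runit_inverse unfolding runit_def by blast

lemma runit_one [simp]: "runit (1::'a::ring_1)"
  unfolding runit_def by auto

lemma rinv_one [simp]: "rinv (1::'a::ring_1) = 1"
  by (rule rinv_eqI) simp_all

lemma runit_mult [simp]:
  fixes x y :: "'a::ring_1"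
  assumes "runit x" "runit y"
  shows "runit (x * y)"
  unfolding runit_def using assms by (intro exI[of _ "rinv y * rinv x"]) (simp add: mult.assoc)

lemma rinv_mult:
  fixes x y :: "'a::ring_1"
  assumes "runit x" "runit y"
  shows "rinv (x * y) = rinv y * rinv x"
  using assms by (intro rinv_eqI) (simp_all add: mult.assoc)

lemma runit_minus_iff [simp]: "runit (- x) \<longleftrightarrow> runit (x::'a::ring_1)"
  unfolding runit_def by (metis minus_minus mult_minus_left mult_minus_right)

lemma rinv_minus:
  fixes x :: "'a::ring_1"
  assumes "runit x"
  shows "rinv (- x) = - rinv x"
  using assms by (intro rinv_eqI) simp_all

lemma rinv_diff_swap:
  fixes a b :: "'a::ring_1"
  assumes "runit (a - b)"
  shows "rinv (b - a) = - rinv (a - b)"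
  using assms rinv_minus by (metis minus_diff_eq)

lemma runit_mult_cancel_left:
  fixes x y :: "'a::ring_1"
  assumes "runit x" "runit (x * y)"
  shows "runit y"
  using assms runit_mult[OF runit_rinv] by (metis runit_inverse_cancel(2))

lemma runit_mult_cancel_right:
  fixes x y :: "'a::ring_1"
  assumes "runit y" "runit (x * y)"
  shows "runit x"
proof -
  have "x = (x * y) * rinv y" using assms by (simp add: mult.assoc)
  then show ?thesis using assms by (metis runit_mult runit_rinv)
qed


section \<open>Cyclic order\<close>

lemmas linorder_cases_facts = less_trans less_irrefl linorder_neqE order.strict_implies_not_eq

lemma cyc3_distinct: "cyc3 a b c \<Longrightarrow> a \<noteq> b \<and> b \<noteq> c \<and> a \<noteq> c"
  unfolding cyc3_def by (smt (z3) linorder_cases_facts)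

lemma cyc3_asym: "cyc3 a b c \<Longrightarrow> \<not> cyc3 c b a"
  unfolding cyc3_def by (smt (z3) linorder_cases_facts)

lemma cyc3_cases: "a \<noteq> b \<Longrightarrow> b \<noteq> c \<Longrightarrow> a \<noteq> c \<Longrightarrow> cyc3 a b c \<or> cyc3 c b a"
  unfolding cyc3_def by (smt (z3) linorder_cases_facts)

lemmas crosses_unfold = crosses_def cyc3_def cyc4_def Let_def

lemmas crosses_facts = linorder_cases_facts fst_conv snd_conv
  distinct_length_2_or_more distinct_singleton

lemma crosses_iff:
  "crosses (i,k) (j,l) \<longleftrightarrow> (cyc3 i j k \<and> cyc3 k l i) \<or> (cyc3 i l k \<and> cyc3 k j i)"
  unfolding crosses_unfold by (smt (z3) crosses_facts)

lemma crosses_distinct: "crosses (i,k) (j,l) \<Longrightarrow> distinct [i,j,k,l]"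
  unfolding crosses_def Let_def by simp

lemma crosses_swap_right: "crosses (i,k) (j,l) \<longleftrightarrow> crosses (i,k) (l,j)"
  unfolding crosses_iff by blast

lemma crosses_swap_left: "crosses (i,k) (j,l) \<longleftrightarrow> crosses (k,i) (j,l)"
  unfolding crosses_iff by blast

definition arc :: "'v::linorder \<Rightarrow> 'v \<Rightarrow> 'v set \<Rightarrow> 'v set" where
  "arc t v P = {x\<in>P. x = t \<or> x = v \<or> cyc3 t x v}"

lemma arc_subset: "arc t v P \<subseteq> P"
  unfolding arc_def by auto

lemma endpoints_mem_arc: "t \<in> P \<Longrightarrow> v \<in> P \<Longrightarrow> t \<in> arc t v P \<and> v \<in> arc t v P"
  unfolding arc_def by auto

lemma arc_cover: "t \<noteq> v \<Longrightarrow> x \<in> P \<Longrightarrow> x \<in> arc t v P \<or> x \<in> arc v t P"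
  unfolding arc_def using cyc3_cases[of t x v] by auto

lemma arc_inter: "x \<in> arc t v P \<Longrightarrow> x \<in> arc v t P \<Longrightarrow> x = t \<or> x = v"
  unfolding arc_def using cyc3_asym[of t x v] by auto

lemma crosses_iff_not_same_arc:
  assumes "i \<in> P" "k \<in> P" "t \<noteq> v"
  shows "crosses (i,k) (t,v) \<longleftrightarrow>
    \<not> (i \<in> arc t v P \<and> k \<in> arc t v P) \<and> \<not> (i \<in> arc v t P \<and> k \<in> arc v t P)"
  using assms unfolding arc_def mem_Collect_eq crosses_unfold by (smt (z3) crosses_facts)

lemma crosses_chord_in_arc:
  assumes "t' \<in> arc t v P" "v' \<in> arc t v P" "i \<in> P" "k \<in> P" "t \<noteq> v"
    and "crosses (i,k) (t',v')" "\<not> (i \<in> arc t v P \<and> k \<in> arc t v P)"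
  shows "crosses (i,k) (t,v)"
  using assms unfolding arc_def mem_Collect_eq crosses_unfold by (smt (z3) crosses_facts)

lemma crosses_replace_outside:
  assumes "t' \<in> arc t v P" "v' \<in> arc t v P" "k \<in> P" "k \<notin> arc t v P"
    and "x = t \<or> x = v" "x \<noteq> t'" "x \<noteq> v'" "crosses (i,k) (t',v')"
  shows "crosses (i,x) (t',v')"
  using assms unfolding arc_def mem_Collect_eq crosses_unfold by (smt (z3) crosses_facts)

section \<open>Splitting a dissected polygon along a diagonal\<close>

definition arc_dissection :: "'v::linorder \<Rightarrow> 'v \<Rightarrow> 'v set \<Rightarrow> ('v \<times> 'v) set \<Rightarrow> ('v \<times> 'v) set" where
  "arc_dissection t v P E = E \<inter> diag (arc t v P) - {(t,v), (v,t)}"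

lemma arc_dissection_subset: "arc_dissection t v P E \<subseteq> E"
  unfolding arc_dissection_def by blast

lemma cyc3_gap:
  fixes Q :: "'v::linorder set"
  assumes "finite Q" "x \<notin> Q" "2 \<le> card Q"
  shows "\<exists>a\<in>Q. \<exists>b\<in>Q. a \<noteq> b \<and> cyc3 a x b \<and> (\<forall>y\<in>Q. \<not> cyc3 a y b)"
proof -
  have ne: "Q \<noteq> {}" using assms by auto
  have min_max: "Min Q < Max Q"
  proof -
    have "card (Q - {Min Q}) \<noteq> 0" using assms ne by (simp add: card_Diff_singleton)
    then obtain q where "q \<in> Q" "q \<noteq> Min Q" by (metis Diff_iff card.empty ex_in_conv singletonI)
    moreover have "Min Q \<le> q" "q \<le> Max Q" using assms(1) \<open>q \<in> Q\<close> by auto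
    ultimately show ?thesis by auto
  qed
  define Lo where "Lo = {y\<in>Q. y < x}"
  define Hi where "Hi = {y\<in>Q. x < y}"
  have fin: "finite Lo" "finite Hi" using assms(1) by (simp_all add: Lo_def Hi_def)
  have "y < x \<or> x < y" if "y \<in> Q" for y using that assms(2) by (metis neq_iff)
  then have Q: "Q = Lo \<union> Hi" by (auto simp: Lo_def Hi_def)
  show ?thesis
  proof (cases "Lo \<noteq> {} \<and> Hi \<noteq> {}")
    case True
    define a where "a = Max Lo"
    define b where "b = Min Hi"
    have "a \<in> Lo" "b \<in> Hi" unfolding a_def b_def using True fin by (auto intro: Max_in Min_in)
    then have a: "a \<in> Q" "a < x" "\<forall>y\<in>Lo. y \<le> a" and b: "b \<in> Q" "x < b" "\<forall>y\<in>Hi. b \<le> y"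
      using fin unfolding a_def b_def Lo_def Hi_def by auto
    have "\<not> cyc3 a y b" if "y \<in> Q" for y
    proof -
      have "y \<le> a \<or> b \<le> y" using that a b Q by auto
      then show ?thesis using a b unfolding cyc3_def by auto
    qed
    moreover have "cyc3 a x b" using a b unfolding cyc3_def by auto
    ultimately show ?thesis using a b by (intro bexI[where x=a] bexI[where x=b] conjI) auto
  next
    case False
    then have "(\<forall>y\<in>Q. y < x) \<or> (\<forall>y\<in>Q. x < y)" using Q unfolding Lo_def Hi_def by auto
    then have "cyc3 (Max Q) x (Min Q)" using min_max assms(1) ne unfolding cyc3_def by auto
    moreover have "\<not> cyc3 (Max Q) y (Min Q)" if "y \<in> Q" for y
      using assms(1) that unfolding cyc3_def by (auto simp: not_less)
    ultimately show ?thesis using min_max assms(1) ne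
      by (intro bexI[where x="Max Q"] bexI[where x="Min Q"] conjI) auto
  qed
qed

lemma is_edge_of_gap: "a \<in> Q \<Longrightarrow> b \<in> Q \<Longrightarrow> a \<noteq> b \<Longrightarrow> \<forall>y\<in>Q. \<not> cyc3 a y b \<Longrightarrow> is_edge Q (a,b)"
  unfolding is_edge_def diag_def by auto

lemma is_edge_subset: "is_edge P d \<Longrightarrow> Q \<subseteq> P \<Longrightarrow> d \<in> diag Q \<Longrightarrow> is_edge Q d"
  unfolding is_edge_def by blast

lemma is_edge_not_crosses: "is_edge P (a,b) \<Longrightarrow> t \<in> P \<Longrightarrow> v \<in> P \<Longrightarrow> \<not> crosses (a,b) (t,v)"
  unfolding is_edge_def crosses_iff by auto

lemma diag_in_arc:
  assumes "(a,b) \<in> diag P" "\<not> crosses (a,b) (t,v)" "t \<noteq> v"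
  shows "(a,b) \<in> diag (arc t v P) \<or> (a,b) \<in> diag (arc v t P)"
  using assms crosses_iff_not_same_arc[of a P b t v] unfolding diag_def by auto

lemma dissection_internal: "dissection P E \<Longrightarrow> d \<in> E \<Longrightarrow> d \<in> diag P \<and> \<not> is_edge P d"
  unfolding dissection_def internal_def by blast

lemma dissection_sym: "dissection P E \<Longrightarrow> (t,v) \<in> E \<Longrightarrow> (v,t) \<in> E"
  unfolding dissection_def by blast

lemma dissection_not_crosses: "dissection P E \<Longrightarrow> d \<in> E \<Longrightarrow> e \<in> E \<Longrightarrow> \<not> crosses d e"
  unfolding dissection_def by blast

lemma dissection_diagonal:
  assumes "dissection P E" "(t,v) \<in> E"
  shows "t \<in> P" "v \<in> P" "t \<noteq> v" "\<exists>x\<in>P. cyc3 t x v"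
  using dissection_internal[OF assms] unfolding is_edge_def diag_def by auto

lemma finite_dissection:
  assumes "polygon P" "dissection P E"
  shows "finite E"
proof (rule finite_subset)
  show "E \<subseteq> P \<times> P" using dissection_internal[OF assms(2)] unfolding diag_def by auto
  show "finite (P \<times> P)" using assms(1) unfolding polygon_def by simp
qed

lemma polygon_arc:
  assumes "polygon P" "dissection P E" "(t,v) \<in> E"
  shows "polygon (arc t v P)"
proof -
  obtain x where x: "x \<in> P" "cyc3 t x v" using dissection_diagonal[OF assms(2,3)] by blast
  have fin: "finite (arc t v P)"
    using assms(1) finite_subset[OF arc_subset] unfolding polygon_def by blast
  have "{t,x,v} \<subseteq> arc t v P"
    using x dissection_diagonal[OF assms(2,3)] unfolding arc_def by auto
  moreover have "card {t,x,v} = 3" using cyc3_distinct[OF x(2)] by simp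
  ultimately have "3 \<le> card (arc t v P)" using card_mono[OF fin] by metis
  with fin show ?thesis unfolding polygon_def by simp
qed

lemma is_edge_arc_endpoints:
  assumes "t \<in> P" "v \<in> P" "t \<noteq> v"
  shows "is_edge (arc t v P) (t,v)" "is_edge (arc t v P) (v,t)"
proof -
  have "\<not> cyc3 v x t" if "x \<in> arc t v P" for x
    using that cyc3_distinct cyc3_asym unfolding arc_def by blast
  then show "is_edge (arc t v P) (t,v)" "is_edge (arc t v P) (v,t)"
    using assms endpoints_mem_arc unfolding is_edge_def diag_def by auto
qed

lemma arc_gap_endpoints:
  assumes ab: "a \<in> arc t v P" "b \<in> arc t v P" "a \<noteq> b" and tv: "t \<in> P" "v \<in> P" "t \<noteq> v"
    and x: "x \<in> P" "cyc3 a x b" and gap: "\<forall>y\<in>arc t v P. \<not> cyc3 a y b"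
  shows "a = v \<and> b = t"
proof -
  have "x \<notin> arc t v P" using x gap by blast
  then have "cyc3 v x t" using x(1) tv(3) cyc3_cases[of t x v] unfolding arc_def by auto
  moreover have "\<not> cyc3 a t b" "\<not> cyc3 a v b" using gap endpoints_mem_arc[OF tv(1,2)] by blast+
  ultimately show ?thesis
    using ab x(2) unfolding arc_def mem_Collect_eq cyc3_def by (smt (z3) linorder_cases_facts)
qed

lemma is_edge_arc:
  assumes tv: "t \<in> P" "v \<in> P" "t \<noteq> v" and e: "is_edge (arc t v P) (a,b)"
  shows "is_edge P (a,b) \<or> (a,b) = (t,v) \<or> (a,b) = (v,t)"
proof -
  have ab: "a \<in> arc t v P" "b \<in> arc t v P" "a \<noteq> b" using e unfolding is_edge_def diag_def by auto
  then have "(a,b) \<in> diag P" using arc_subset unfolding diag_def by auto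
  moreover have "(\<forall>y\<in>arc t v P. \<not> cyc3 a y b) \<or> (\<forall>y\<in>arc t v P. \<not> cyc3 b y a)"
    using e unfolding is_edge_def by auto
  ultimately show ?thesis
    using arc_gap_endpoints[OF ab tv] arc_gap_endpoints[OF ab(2,1) ab(3)[symmetric] tv] unfolding is_edge_def by auto
qed

lemma dissection_arc:
  assumes dis: "dissection P E" and tvE: "(t,v) \<in> E"
  shows "dissection (arc t v P) (arc_dissection t v P E)"
  unfolding dissection_def
proof (intro conjI ballI)
  fix d assume d: "d \<in> arc_dissection t v P E"
  then have "\<not> is_edge P d" "d \<noteq> (t,v)" "d \<noteq> (v,t)"
    using dissection_internal[OF dis] unfolding arc_dissection_def by auto
  then have "\<not> is_edge (arc t v P) d"
    using is_edge_arc[OF dissection_diagonal(1-3)[OF dis tvE], of "fst d" "snd d"] by auto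
  then show "internal (arc t v P) d" using d unfolding arc_dissection_def internal_def by auto
next
  fix d assume "d \<in> arc_dissection t v P E"
  then show "case d of (a,b) \<Rightarrow> (b,a) \<in> arc_dissection t v P E"
    using dissection_sym[OF dis] unfolding arc_dissection_def diag_def by auto
next
  fix d e assume "d \<in> arc_dissection t v P E" "e \<in> arc_dissection t v P E"
  then show "\<not> crosses d e" using dissection_not_crosses[OF dis] unfolding arc_dissection_def by blast
qed

lemma card_arc_dissection_less: "finite E \<Longrightarrow> (t,v) \<in> E \<Longrightarrow> card (arc_dissection t v P E) < card E"
  unfolding arc_dissection_def by (rule psubset_card_mono) auto

lemma dissection_subset_arcs:
  assumes "dissection P E" "(t,v) \<in> E"
  shows "E \<subseteq> diag (arc t v P) \<union> diag (arc v t P)"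
proof
  fix d assume d: "d \<in> E"
  then have "d \<in> diag P" "\<not> crosses d (t,v)"
    using dissection_internal[OF assms(1)] dissection_not_crosses[OF assms(1) _ assms(2)] by auto
  then show "d \<in> diag (arc t v P) \<union> diag (arc v t P)"
    using diag_in_arc[of "fst d" "snd d"] dissection_diagonal(3)[OF assms] by auto
qed

lemma piece_of_arc:
  assumes dis: "dissection P E" and tvE: "(t,v) \<in> E"
    and pc: "piece (arc t v P) (arc_dissection t v P E) Q"
  shows "piece P E Q"
  unfolding piece_def
proof (intro conjI allI impI ballI)
  note tv = dissection_diagonal[OF dis tvE]
  have Q: "Q \<subseteq> arc t v P" using pc unfolding piece_def by auto
  then show "Q \<subseteq> P" using arc_subset by blast
  show "3 \<le> card Q" using pc unfolding piece_def by auto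
  fix d assume "is_edge Q d"
  then have "d \<in> arc_dissection t v P E \<or> is_edge (arc t v P) d" using pc unfolding piece_def by blast
  then show "d \<in> E \<or> is_edge P d"
    using is_edge_arc[OF tv(1-3), of "fst d" "snd d"] tvE dissection_sym[OF dis tvE]
    unfolding arc_dissection_def by auto
next
  have Q: "Q \<subseteq> arc t v P" using pc unfolding piece_def by auto
  fix d assume dE: "d \<in> E" and dQ: "d \<in> diag Q"
  show "is_edge Q d"
  proof (cases "d \<in> arc_dissection t v P E")
    case True
    then show ?thesis using pc dQ unfolding piece_def by auto
  next
    case False
    moreover have "d \<in> diag (arc t v P)" using dQ Q unfolding diag_def by auto
    ultimately have "d = (t,v) \<or> d = (v,t)" using dE unfolding arc_dissection_def by auto
    moreover have "\<not> cyc3 v x t" if "x \<in> Q" for x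
      using that Q cyc3_distinct cyc3_asym unfolding arc_def by blast
    ultimately show ?thesis using dQ unfolding is_edge_def by auto
  qed
qed

lemma piece_in_arc:
  assumes dis: "dissection P E" and tvE: "(t,v) \<in> E"
    and pc: "piece P E Q" and Q: "Q \<subseteq> arc t v P"
  shows "piece (arc t v P) (arc_dissection t v P E) Q"
  unfolding piece_def
proof (intro conjI allI impI ballI)
  note tv = dissection_diagonal[OF dis tvE]
  show "Q \<subseteq> arc t v P" "3 \<le> card Q" using Q pc unfolding piece_def by auto
  fix d assume ed: "is_edge Q d"
  then have d: "d \<in> diag (arc t v P)" using Q unfolding is_edge_def diag_def by auto
  have "d \<in> E \<or> is_edge P d" using pc ed unfolding piece_def by blast
  then show "d \<in> arc_dissection t v P E \<or> is_edge (arc t v P) d"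
    using d is_edge_arc_endpoints[OF tv(1-3)] is_edge_subset[OF _ arc_subset d]
    unfolding arc_dissection_def by auto
next
  fix d assume "d \<in> arc_dissection t v P E" "d \<in> diag Q"
  then show "is_edge Q d" using pc unfolding piece_def arc_dissection_def by blast
qed

text \<open>A piece containing points strictly on both sides of \<open>(t,v)\<close> but not \<open>t\<close> itself would have
  an edge crossing \<open>(t,v)\<close>, namely the one spanning the gap of the piece around \<open>t\<close>.\<close>

lemma piece_not_across:
  assumes pol: "polygon P" and dis: "dissection P E" and tvE: "(t,v) \<in> E"
    and pc: "piece P E Q" and t: "t \<notin> Q"
    and x: "x \<in> Q" "cyc3 v x t" and y: "y \<in> Q" "cyc3 t y v"
  shows False
proof -
  note tv = dissection_diagonal[OF dis tvE]
  have QP: "Q \<subseteq> P" and card: "3 \<le> card Q" using pc unfolding piece_def by auto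
  have "finite Q" using pol QP finite_subset unfolding polygon_def by blast
  then obtain a b where ab: "a \<in> Q" "b \<in> Q" "a \<noteq> b" "cyc3 a t b" "\<forall>y\<in>Q. \<not> cyc3 a y b"
    using cyc3_gap[OF _ t] card by fastforce
  have "cyc3 b v a"
    using ab(4) ab(5) x y unfolding cyc3_def by (smt (z3) linorder_cases_facts)
  then have cr: "crosses (a,b) (t,v)" unfolding crosses_iff using ab(4) by blast
  have "(a,b) \<in> E \<or> is_edge P (a,b)"
    using pc is_edge_of_gap[OF ab(1-3,5)] unfolding piece_def by blast
  then show False
    using cr dissection_not_crosses[OF dis _ tvE] is_edge_not_crosses[OF _ tv(1,2)] by blast
qed

lemma piece_subset_arc:
  assumes pol: "polygon P" and dis: "dissection P E" and tvE: "(t,v) \<in> E" and pc: "piece P E Q"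
  shows "Q \<subseteq> arc t v P \<or> Q \<subseteq> arc v t P"
proof (rule ccontr)
  note tv = dissection_diagonal[OF dis tvE]
  assume "\<not> (Q \<subseteq> arc t v P \<or> Q \<subseteq> arc v t P)"
  then obtain x y where x: "x \<in> Q" "x \<notin> arc t v P" and y: "y \<in> Q" "y \<notin> arc v t P" by blast
  have QP: "Q \<subseteq> P" using pc unfolding piece_def by auto
  have xc: "cyc3 v x t" using x QP tv(3) cyc3_cases[of t x v] unfolding arc_def by auto
  have yc: "cyc3 t y v" using y QP tv(3) cyc3_cases[of v y t] unfolding arc_def by auto
  consider "t \<in> Q" "v \<in> Q" | "t \<notin> Q" | "v \<notin> Q" by blast
  then show False
  proof cases
    case 1
    then have "is_edge Q (t,v)" using pc tvE tv(3) unfolding piece_def diag_def by auto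
    then show False using x(1) xc y(1) yc unfolding is_edge_def by auto
  next
    case 2
    then show False using piece_not_across[OF pol dis tvE pc _ x(1) xc y(1) yc] by blast
  next
    case 3
    then show False
      using piece_not_across[OF pol dis dissection_sym[OF dis tvE] pc _ y(1) yc x(1) xc] by blast
  qed
qed

lemma piece_whole: "polygon P \<Longrightarrow> piece P {} P"
  unfolding piece_def polygon_def by auto

lemma piece_undissected:
  assumes pol: "polygon P" and pc: "piece P {} Q"
  shows "Q = P"
proof (rule ccontr)
  assume "Q \<noteq> P"
  have QP: "Q \<subseteq> P" and card: "3 \<le> card Q" using pc unfolding piece_def by auto
  then obtain x where x: "x \<in> P" "x \<notin> Q" using \<open>Q \<noteq> P\<close> by blast
  have "finite Q" using pol QP finite_subset unfolding polygon_def by blast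
  then obtain a b where ab: "a \<in> Q" "b \<in> Q" "a \<noteq> b" "cyc3 a x b" "\<forall>y\<in>Q. \<not> cyc3 a y b"
    using cyc3_gap[OF _ x(2)] card by fastforce
  have "card {a,b} \<le> 2" by (simp add: card_insert_if)
  then have "\<not> Q \<subseteq> {a,b}" using card card_mono[of "{a,b}" Q] by auto
  then obtain z where z: "z \<in> Q" "z \<noteq> a" "z \<noteq> b" by blast
  have "cyc3 b z a" using z ab(3,5) cyc3_cases[of a z b] by auto
  moreover have "is_edge P (a,b)" using pc is_edge_of_gap[OF ab(1-3,5)] unfolding piece_def by blast
  ultimately show False using x ab(4) z QP unfolding is_edge_def by auto
qed

lemma dissection_induct [consumes 2, case_names undissected split]:
  assumes "polygon P" "dissection P E"
    and undissected: "\<And>P. polygon P \<Longrightarrow> R P {}"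
    and split: "\<And>P E t v. polygon P \<Longrightarrow> dissection P E \<Longrightarrow> (t,v) \<in> E
      \<Longrightarrow> R (arc t v P) (arc_dissection t v P E) \<Longrightarrow> R (arc v t P) (arc_dissection v t P E) \<Longrightarrow> R P E"
  shows "R P E"
  using assms(1,2)
proof (induction "card E" arbitrary: P E rule: less_induct)
  case less
  show ?case
  proof (cases "E = {}")
    case True
    then show ?thesis using undissected less.prems(1) by simp
  next
    case False
    then obtain t v where tv: "(t,v) \<in> E" by auto
    have vt: "(v,t) \<in> E" by (rule dissection_sym[OF less.prems(2) tv])
    have fin: "finite E" by (rule finite_dissection[OF less.prems])
    show ?thesis
    proof (rule split[OF less.prems tv]; rule less.hyps)
      show "card (arc_dissection t v P E) < card E" "card (arc_dissection v t P E) < card E"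
        using card_arc_dissection_less[OF fin] tv vt by auto
      show "polygon (arc t v P)" "polygon (arc v t P)"
        using polygon_arc[OF less.prems] tv vt by auto
      show "dissection (arc t v P) (arc_dissection t v P E)" "dissection (arc v t P) (arc_dissection v t P E)"
        using dissection_arc[OF less.prems(2)] tv vt by auto
    qed
  qed
qed

section \<open>Factorized friezes\<close>

abbreviation triangle :: "('v \<times> 'v \<Rightarrow> 'a::ring_1) \<Rightarrow> 'v \<Rightarrow> 'v \<Rightarrow> 'v \<Rightarrow> 'a" where
  "triangle c i j k \<equiv> c (i,j) * rinv (c (k,j)) * c (k,i)"

abbreviation ptolemy :: "('v \<times> 'v \<Rightarrow> 'a::ring_1) \<Rightarrow> 'v \<Rightarrow> 'v \<Rightarrow> 'v \<Rightarrow> 'v \<Rightarrow> 'a" where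
  "ptolemy c i k j l \<equiv> c (i,j) * rinv (c (l,j)) * c (l,k) + c (i,l) * rinv (c (j,l)) * c (j,k)"

lemma frieze_triangle:
  "frieze Q c \<Longrightarrow> i \<in> Q \<Longrightarrow> j \<in> Q \<Longrightarrow> k \<in> Q \<Longrightarrow> distinct [i,j,k] \<Longrightarrow>
    triangle c i j k = triangle c i k j"
  unfolding frieze_def by blast

lemma frieze_ptolemy:
  "frieze Q c \<Longrightarrow> i \<in> Q \<Longrightarrow> j \<in> Q \<Longrightarrow> k \<in> Q \<Longrightarrow> l \<in> Q \<Longrightarrow> crosses (i,k) (j,l) \<Longrightarrow>
    c (i,k) = ptolemy c i k j l"
  unfolding frieze_def by blast

lemma frieze_runit: "frieze Q c \<Longrightarrow> i \<in> Q \<Longrightarrow> k \<in> Q \<Longrightarrow> i \<noteq> k \<Longrightarrow> runit (c (i,k))"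
  unfolding frieze_def diag_def by blast

lemma ptolemy_swap: "ptolemy c i k l j = ptolemy c i k j l"
  by (simp add: add.commute)

text \<open>Reading the cycle from \<open>t\<close> on gives a linear order on the vertices, with \<open>t\<close> first.\<close>

definition precedes :: "'v::linorder \<Rightarrow> 'v \<Rightarrow> 'v \<Rightarrow> bool" where
  "precedes t a b \<longleftrightarrow> a = t \<or> (b \<noteq> t \<and> cyc3 t a b)"

definition orient :: "'v::linorder \<Rightarrow> 'v \<Rightarrow> 'v \<Rightarrow> 'a::ring_1" where
  "orient t i k = (if precedes t i k then 1 else -1)"

lemma orient_cases: "orient t i k = 1 \<or> orient t i k = -1"
  unfolding orient_def by auto

lemma orient_square [simp]: "orient t i k * orient t i k = 1"
  unfolding orient_def by auto

lemma orient_square_cancel: "orient t i k * (orient t i k * x) = x"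
  by (simp add: mult.assoc[symmetric])

lemma runit_orient [simp]: "runit (orient t i k)"
  unfolding orient_def by simp

lemma orient_commute: "orient t i k * x = x * orient t i k"
  unfolding orient_def by auto

lemma orient_swap:
  assumes "i \<noteq> k"
  shows "orient t k i = - orient t i k"
proof -
  have "precedes t k i \<longleftrightarrow> \<not> precedes t i k"
    using assms unfolding precedes_def cyc3_def by (smt (z3) linorder_cases_facts)
  then show ?thesis unfolding orient_def by auto
qed

lemma precedes_crosses:
  assumes "crosses (i,k) (j,l)"
  shows "(precedes t i j \<longleftrightarrow> precedes t l j) \<longleftrightarrow> (precedes t l k \<longleftrightarrow> precedes t i k)"
  using assms unfolding crosses_unfold precedes_def by (smt (z3) crosses_facts)

lemma orient_crosses:
  assumes "crosses (i,k) (j,l)"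
  shows "orient t i j * orient t l j * orient t l k = orient t i k"
  using precedes_crosses[OF assms, of t] unfolding orient_def
  by (cases "precedes t i j"; cases "precedes t l j"; cases "precedes t l k"; simp)

lemma orient_triangle:
  assumes "distinct [i,j,k]"
  shows "orient t i j * orient t k j * orient t k i = - (orient t i k * orient t j k * orient t j i)"
proof -
  have swap: "orient t k j = - orient t j k" "orient t k i = - orient t i k" "orient t j i = - orient t i j"
    using assms orient_swap by auto
  show ?thesis unfolding swap unfolding orient_def
    by (cases "precedes t i j"; cases "precedes t j k"; cases "precedes t i k"; simp)
qed

text \<open>The coordinate of \<open>t\<close> is at infinity: differences involving \<open>t\<close> are replaced by \<open>1\<close>.\<close>

definition zdiff :: "'v \<Rightarrow> ('v \<Rightarrow> 'a::ring_1) \<Rightarrow> 'v \<times> 'v \<Rightarrow> 'a" where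
  "zdiff t z = (\<lambda>(i,k). if i = t \<or> k = t then 1 else z k - z i)"

lemma unit_diff_triangle:
  fixes a b c :: "'a::ring_1"
  assumes "runit (b - c)"
  shows "(b - a) * rinv (b - c) * (a - c) = - ((c - a) * rinv (c - b) * (a - b))"
proof -
  define u where "u = b - c"
  have c: "c = b - u" and U: "runit u" using assms by (simp_all add: u_def)
  have r: "rinv (c - b) = - rinv u" using U unfolding c by (simp add: rinv_minus[symmetric])
  show ?thesis unfolding r unfolding u_def[symmetric] c using U by (simp add: algebra_simps)
qed

lemma zdiff_triangle:
  assumes "distinct [i,j,k]" "runit (zdiff t z (k,j))"
  shows "triangle (zdiff t z) i j k = - triangle (zdiff t z) i k j"
proof -
  consider "i = t" | "j = t" | "k = t" | "i \<noteq> t" "j \<noteq> t" "k \<noteq> t" by blast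
  then show ?thesis
  proof cases
    case 1
    then have "runit (z j - z k)" using assms by (auto simp: zdiff_def)
    then show ?thesis using assms 1 by (auto simp: zdiff_def rinv_diff_swap)
  next
    case 4
    then have "runit (z j - z k)" using assms by (simp add: zdiff_def)
    then show ?thesis using assms 4 unit_diff_triangle[of "z j" "z k" "z i"] by (simp add: zdiff_def)
  qed (use assms in \<open>auto simp: zdiff_def\<close>)
qed

lemma unit_diff_ptolemy:
  fixes a b c d :: "'a::ring_1"
  assumes "runit (b - d)"
  shows "c - a = (b - a) * rinv (b - d) * (c - d) + (d - a) * rinv (d - b) * (c - b)"
proof -
  define u where "u = b - d"
  have b: "b = d + u" and U: "runit u" using assms by (simp_all add: u_def)
  have r: "rinv (d - b) = - rinv u" using U unfolding b by (simp add: rinv_minus[symmetric])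
  show ?thesis unfolding r unfolding u_def[symmetric] b using U by (simp add: algebra_simps)
qed

lemma zdiff_ptolemy:
  assumes "distinct [i,j,k,l]" "runit (zdiff t z (l,j))"
  shows "zdiff t z (i,k) = ptolemy (zdiff t z) i k j l"
proof -
  consider "i = t" | "k = t" | "j = t \<or> l = t" | "i \<noteq> t" "j \<noteq> t" "k \<noteq> t" "l \<noteq> t" by blast
  then show ?thesis
  proof cases
    case 1
    then have U: "runit (z j - z l)" using assms by (auto simp: zdiff_def)
    have "rinv (z j - z l) * (z k - z l) + rinv (z l - z j) * (z k - z j)
        = rinv (z j - z l) * (z j - z l)"
      unfolding rinv_diff_swap[OF U] by (simp add: algebra_simps)
    then show ?thesis using assms 1 U by (auto simp: zdiff_def)
  next
    case 2
    then have U: "runit (z j - z l)" using assms by (auto simp: zdiff_def)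
    have "(z j - z i) * rinv (z j - z l) + (z l - z i) * rinv (z l - z j)
        = (z j - z l) * rinv (z j - z l)"
      unfolding rinv_diff_swap[OF U] by (simp add: algebra_simps)
    then show ?thesis using assms 2 U by (auto simp: zdiff_def)
  next
    case 4
    then have "runit (z j - z l)" using assms by (simp add: zdiff_def)
    then show ?thesis using assms 4 unit_diff_ptolemy[of "z j" "z l" "z k" "z i"] by (simp add: zdiff_def)
  qed (use assms in \<open>auto simp: zdiff_def\<close>)
qed

lemma signed_factor_product:
  fixes e1 e2 e3 :: "'a::ring_1"
  assumes "e1 = 1 \<or> e1 = -1" "e2 = 1 \<or> e2 = -1" "e3 = 1 \<or> e3 = -1"
    and "runit lk" "runit mj" "runit d2"
  shows "(e1 * (li * d1 * mj)) * rinv (e2 * (lk * d2 * mj)) * (e3 * (lk * d3 * mi))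
       = (e1 * e2 * e3) * (li * (d1 * rinv d2 * d3) * mi)"
proof -
  have "rinv (lk * d2 * mj) = rinv mj * rinv d2 * rinv lk"
    using assms by (simp add: rinv_mult mult.assoc)
  then have "(li * d1 * mj) * rinv (lk * d2 * mj) * (lk * d3 * mi) = li * (d1 * rinv d2 * d3) * mi"
    using assms by (simp add: mult.assoc)
  then show ?thesis using assms by (elim disjE; simp add: rinv_minus mult.assoc)
qed

text \<open>For \<open>c(i,k) = \<plusminus>\<lambda>\<^sub>i (z\<^sub>k - z\<^sub>i) \<mu>\<^sub>k\<close> the signs and the factors \<open>\<lambda>, \<mu>\<close> cancel in both
  relations, which thereby reduce to identities between the differences \<open>z\<^sub>k - z\<^sub>i\<close>.\<close>

lemma frieze_factorized:
  fixes c :: "'v::linorder \<times> 'v \<Rightarrow> 'a::ring_1"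
  assumes lam: "\<And>i. i \<in> Q \<Longrightarrow> runit (lam i)" and mu: "\<And>i. i \<in> Q \<Longrightarrow> runit (mu i)"
    and c: "\<And>i k. i \<in> Q \<Longrightarrow> k \<in> Q \<Longrightarrow> i \<noteq> k \<Longrightarrow> c (i,k) = orient t i k * (lam i * zdiff t z (i,k) * mu k)"
    and units: "\<And>i k. i \<in> Q \<Longrightarrow> k \<in> Q \<Longrightarrow> i \<noteq> k \<Longrightarrow> runit (c (i,k))"
  shows "frieze Q c"
proof -
  have zdiff_unit: "runit (zdiff t z (i,k))" if "i \<in> Q" "k \<in> Q" "i \<noteq> k" for i k
  proof -
    have "runit (orient t i k * c (i,k))" using units[OF that] by simp
    moreover have "orient t i k * c (i,k) = lam i * zdiff t z (i,k) * mu k"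
      using c[OF that] by (simp add: mult.assoc[symmetric])
    ultimately show ?thesis
      using lam mu that by (metis runit_mult_cancel_left runit_mult_cancel_right)
  qed
  have triple: "c (a,b) * rinv (c (d,b)) * c (d,e) = (orient t a b * orient t d b * orient t d e)
      * (lam a * (zdiff t z (a,b) * rinv (zdiff t z (d,b)) * zdiff t z (d,e)) * mu e)"
    if "a \<in> Q" "b \<in> Q" "d \<in> Q" "e \<in> Q" "a \<noteq> b" "d \<noteq> b" "d \<noteq> e" for a b d e
    unfolding c[OF that(1,2,5)] c[OF that(3,2,6)] c[OF that(3,4,7)]
    using that by (intro signed_factor_product orient_cases lam mu zdiff_unit)
  show ?thesis
    unfolding frieze_def
  proof (intro conjI ballI impI)
    fix d assume "d \<in> diag Q"
    then show "runit (c d)" using units unfolding diag_def by auto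
  next
    fix i j k assume ijk: "i \<in> Q" "j \<in> Q" "k \<in> Q" "distinct [i,j,k]"
    then have ne: "i \<noteq> j" "i \<noteq> k" "j \<noteq> k" by auto
    have "triangle c i j k = (orient t i j * orient t k j * orient t k i)
        * (lam i * triangle (zdiff t z) i j k * mu i)"
      using triple ijk ne by simp
    also have "\<dots> = (orient t i k * orient t j k * orient t j i)
        * (lam i * triangle (zdiff t z) i k j * mu i)"
      unfolding orient_triangle[OF ijk(4)] zdiff_triangle[OF ijk(4) zdiff_unit[OF ijk(3,2) ne(3)[symmetric]]]
      by simp
    also have "\<dots> = triangle c i k j"
      using triple ijk ne by simp
    finally show "triangle c i j k = triangle c i k j" .
  next
    fix i j k l assume ijkl: "i \<in> Q" "j \<in> Q" "k \<in> Q" "l \<in> Q" and cr: "crosses (i,k) (j,l)"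
    have d: "distinct [i,j,k,l]" by (rule crosses_distinct[OF cr])
    then have ne: "i \<noteq> j" "l \<noteq> j" "l \<noteq> k" "i \<noteq> l" "j \<noteq> l" "j \<noteq> k" "i \<noteq> k"
      by auto
    have "ptolemy c i k j l = orient t i k * (lam i * ptolemy (zdiff t z) i k j l * mu k)"
      unfolding triple[OF ijkl(1,2,4,3) ne(1-3)] triple[OF ijkl(1,4,2,3) ne(4-6)]
        orient_crosses[OF cr] orient_crosses[OF iffD1[OF crosses_swap_right cr]]
      by (simp add: distrib_left distrib_right)
    also have "\<dots> = c (i,k)"
      unfolding zdiff_ptolemy[OF d zdiff_unit[OF ijkl(4,2) ne(2)], symmetric]
      using c ijkl ne by simp
    finally show "c (i,k) = ptolemy c i k j l" by simp
  qed
qed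

lemma crossing_pairings:
  assumes "distinct [t,v,i,k]"
  shows "(crosses (i,k) (t,v) \<and> (precedes t i k \<longleftrightarrow> precedes t v k) \<and> (precedes t i k \<longleftrightarrow> \<not> precedes t v i))
    \<or> (crosses (i,t) (v,k) \<and> (precedes t i k \<longleftrightarrow> precedes t v k) \<and> (precedes t i k \<longleftrightarrow> precedes t v i))
    \<or> (crosses (i,v) (k,t) \<and> (precedes t i k \<longleftrightarrow> \<not> precedes t v k) \<and> (precedes t i k \<longleftrightarrow> \<not> precedes t v i))"
  using assms unfolding crosses_unfold precedes_def by (smt (z3) crosses_facts)

lemma crosses_excludes_other_pairings:
  "crosses (i,k) (t,v) \<Longrightarrow> \<not> crosses (i,t) (v,k) \<and> \<not> crosses (i,v) (k,t)"
  unfolding crosses_unfold by (smt (z3) crosses_facts)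

text \<open>The factors of a frieze relative to the diagonal \<open>(t,v)\<close>, normalized by
  \<open>\<lambda>\<^sub>t = 1\<close> and \<open>z\<^sub>v = 0\<close>: the row of \<open>t\<close> gives \<open>\<mu>\<close>, the column of \<open>t\<close> gives \<open>\<lambda>\<close>,
  and the row of \<open>v\<close> gives \<open>z\<close>.\<close>

definition lam_of :: "('v \<times> 'v \<Rightarrow> 'a::ring_1) \<Rightarrow> 'v \<Rightarrow> 'v \<Rightarrow> 'v \<Rightarrow> 'a" where
  "lam_of c t v i = (if i = t then 1 else c (i,t) * rinv (c (v,t)))"

definition mu_of :: "('v \<times> 'v \<Rightarrow> 'a::ring_1) \<Rightarrow> 'v \<Rightarrow> 'v \<Rightarrow> 'v \<Rightarrow> 'a" where
  "mu_of c t v k = (if k = t then - c (v,t) else c (t,k))"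

definition z_of :: "('v::linorder \<times> 'v \<Rightarrow> 'a::ring_1) \<Rightarrow> 'v \<Rightarrow> 'v \<Rightarrow> 'v \<Rightarrow> 'a" where
  "z_of c t v k = (if k = v then 0 else orient t v k * c (v,k) * rinv (c (t,k)))"

abbreviation factorization :: "('v::linorder \<times> 'v \<Rightarrow> 'a::ring_1) \<Rightarrow> 'v \<Rightarrow> 'v \<Rightarrow> 'v \<Rightarrow> 'v \<Rightarrow> 'a" where
  "factorization c t v i k \<equiv> orient t i k * (lam_of c t v i * zdiff t (z_of c t v) (i,k) * mu_of c t v k)"

lemma factorization_at_t:
  fixes c :: "'v::linorder \<times> 'v \<Rightarrow> 'a::ring_1"
  assumes "runit (c (v,t))" "i \<noteq> t"
  shows "c (i,t) = factorization c t v i t" "c (t,i) = factorization c t v t i"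
  using assms unfolding orient_def precedes_def lam_of_def mu_of_def zdiff_def
  by (auto simp: mult.assoc)

lemma factorization_from_v:
  fixes c :: "'v::linorder \<times> 'v \<Rightarrow> 'a::ring_1"
  assumes "t \<noteq> v" "k \<noteq> v" "k \<noteq> t" "runit (c (v,t))" "runit (c (t,k))"
  shows "c (v,k) = factorization c t v v k"
proof -
  have "lam_of c t v v = 1" using assms by (auto simp: lam_of_def)
  then have "factorization c t v v k = orient t v k * (orient t v k * c (v,k) * rinv (c (t,k)) * c (t,k))"
    using assms unfolding mu_of_def zdiff_def z_of_def by auto
  then show ?thesis using assms by (simp add: mult.assoc orient_square_cancel)
qed

text \<open>In the following ring identities a variable \<open>cxy\<close> stands for the entry \<open>c(x,y)\<close>.\<close>

lemma ptolemy_solve_for_diagonal: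
  fixes cit civ ckv ckt cik cvk cvt ctv ctk :: "'a::ring_1"
  assumes "runit ckv" "runit cvt" "runit cvk"
    and "cit = civ * rinv ckv * ckt + cik * rinv cvk * cvt"
    and "ckt * rinv cvt * cvk = ckv * rinv ctv * ctk"
  shows "cik = cit * rinv cvt * cvk - civ * rinv ctv * ctk"
proof -
  have "cit * rinv cvt * cvk = civ * rinv ckv * (ckt * rinv cvt * cvk) + cik * rinv cvk * (cvt * rinv cvt) * cvk"
    using assms(4) by (simp add: algebra_simps)
  also have "\<dots> = civ * rinv ctv * ctk + cik"
    unfolding assms(5) using assms(1-3) by (simp add: mult.assoc)
  finally show ?thesis by (simp add: algebra_simps)
qed

lemma ptolemy_solve_for_diagonal':
  fixes cit civ ckv ckt cik cvk cvt ctv ctk :: "'a::ring_1"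
  assumes "runit ckt" "runit ctv" "runit ctk"
    and "civ = cik * rinv ctk * ctv + cit * rinv ckt * ckv"
    and "ckt * rinv cvt * cvk = ckv * rinv ctv * ctk"
  shows "cik = civ * rinv ctv * ctk - cit * rinv cvt * cvk"
proof -
  have "civ * rinv ctv * ctk = cik * rinv ctk * (ctv * rinv ctv) * ctk + cit * rinv ckt * (ckv * rinv ctv * ctk)"
    using assms(4) by (simp add: algebra_simps)
  also have "\<dots> = cik + cit * rinv cvt * cvk"
    unfolding assms(5)[symmetric] using assms(1-3) by (simp add: mult.assoc)
  finally show ?thesis by (simp add: algebra_simps)
qed

lemma factorization_to_v:
  fixes c :: "'v::linorder \<times> 'v \<Rightarrow> 'a::ring_1"
  assumes ne: "t \<noteq> v" "i \<noteq> v" "i \<noteq> t" and units: "runit (c (t,v))" "runit (c (t,i))"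
    and tri: "triangle c i t v = triangle c i v t"
  shows "c (i,v) = factorization c t v i v"
proof -
  have "factorization c t v i v
      = orient t i v * (c (i,t) * rinv (c (v,t)) * (0 - orient t v i * c (v,i) * rinv (c (t,i))) * c (t,v))"
    using ne unfolding lam_of_def mu_of_def zdiff_def z_of_def by simp
  also have "\<dots> = (orient t i v * orient t i v) * (triangle c i t v * rinv (c (t,i)) * c (t,v))"
    unfolding orient_swap[OF ne(2)] by (simp add: mult.assoc orient_commute[of t i v])
  also have "\<dots> = c (i,v) * rinv (c (t,v)) * (c (t,i) * rinv (c (t,i))) * c (t,v)"
    using tri by (simp add: mult.assoc)
  also have "\<dots> = c (i,v)" using units by (simp add: mult.assoc)
  finally show ?thesis by simp
qed

lemma factorization_expand:
  fixes c :: "'v::linorder \<times> 'v \<Rightarrow> 'a::ring_1"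
  assumes ne: "i \<noteq> t" "k \<noteq> t" "i \<noteq> v" "k \<noteq> v" and units: "runit (c (t,i))" "runit (c (t,k))"
    and tri: "triangle c i t v = triangle c i v t"
  shows "factorization c t v i k = orient t i k * (orient t v k * (c (i,t) * rinv (c (v,t)) * c (v,k))
    - orient t v i * (c (i,v) * rinv (c (t,v)) * c (t,k)))"
proof -
  have "lam_of c t v i * zdiff t (z_of c t v) (i,k) * mu_of c t v k
      = c (i,t) * rinv (c (v,t)) * (orient t v k * c (v,k) * rinv (c (t,k))
          - orient t v i * c (v,i) * rinv (c (t,i))) * c (t,k)"
    using ne unfolding lam_of_def mu_of_def zdiff_def z_of_def by simp
  also have "\<dots> = orient t v k * (c (i,t) * rinv (c (v,t)) * c (v,k) * (rinv (c (t,k)) * c (t,k)))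
      - orient t v i * (triangle c i t v * rinv (c (t,i)) * c (t,k))"
    by (simp add: algebra_simps orient_commute)
  also have "\<dots> = orient t v k * (c (i,t) * rinv (c (v,t)) * c (v,k))
      - orient t v i * (c (i,v) * rinv (c (t,v)) * c (t,k))"
    using units tri by (simp add: mult.assoc)
  finally show ?thesis by simp
qed

lemma factorization_pair:
  fixes c :: "'v::linorder \<times> 'v \<Rightarrow> 'a::ring_1"
  assumes ne: "t \<noteq> v" "i \<noteq> k" "i \<noteq> t" "k \<noteq> t"
    and units: "runit (c (v,t))" "runit (c (t,v))" "runit (c (t,i))" "runit (c (t,k))" "runit (c (k,t))"
      "k \<noteq> v \<Longrightarrow> runit (c (k,v))" "k \<noteq> v \<Longrightarrow> runit (c (v,k))"
    and tri_i: "i \<noteq> v \<Longrightarrow> triangle c i t v = triangle c i v t"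
    and tri_k: "k \<noteq> v \<Longrightarrow> triangle c k t v = triangle c k v t"
    and ptolemy_ik: "crosses (i,k) (t,v) \<Longrightarrow> c (i,k) = ptolemy c i k t v"
    and ptolemy_it: "crosses (i,t) (v,k) \<Longrightarrow> c (i,t) = ptolemy c i t v k"
    and ptolemy_iv: "crosses (i,v) (k,t) \<Longrightarrow> c (i,v) = ptolemy c i v k t"
  shows "c (i,k) = factorization c t v i k"
proof -
  consider "i = v" | "k = v" | "i \<noteq> v" "k \<noteq> v" by blast
  then show ?thesis
  proof cases
    case 1
    show ?thesis unfolding 1 by (rule factorization_from_v) (use ne units 1 in auto)
  next
    case 2
    show ?thesis unfolding 2 by (rule factorization_to_v) (use ne units tri_i 2 in auto)
  next
    case 3
    let ?K = "c (i,t) * rinv (c (v,t)) * c (v,k)"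
    let ?L = "c (i,v) * rinv (c (t,v)) * c (t,k)"
    have factored: "factorization c t v i k = orient t i k * (orient t v k * ?K - orient t v i * ?L)"
      using factorization_expand ne 3 units tri_i by blast
    have tri_k': "triangle c k t v = triangle c k v t" by (rule tri_k[OF 3(2)])
    have "distinct [t,v,i,k]" using ne 3 by auto
    from crossing_pairings[OF this] show ?thesis
    proof (elim disjE conjE)
      assume "crosses (i,k) (t,v)" "precedes t i k \<longleftrightarrow> precedes t v k" "precedes t i k \<longleftrightarrow> \<not> precedes t v i"
      then show ?thesis unfolding factored unfolding orient_def using ptolemy_ik by auto
    next
      assume cr: "crosses (i,t) (v,k)" and "precedes t i k \<longleftrightarrow> precedes t v k"
        "precedes t i k \<longleftrightarrow> precedes t v i"
      moreover have "c (i,k) = ?K - ?L"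
        using ptolemy_solve_for_diagonal[OF units(6)[OF 3(2)] units(1) units(7)[OF 3(2)] ptolemy_it[OF cr] tri_k'] .
      ultimately show ?thesis unfolding factored unfolding orient_def by (auto simp: algebra_simps)
    next
      assume cr: "crosses (i,v) (k,t)" and "precedes t i k \<longleftrightarrow> \<not> precedes t v k"
        "precedes t i k \<longleftrightarrow> \<not> precedes t v i"
      moreover have "c (i,k) = ?L - ?K"
        using ptolemy_solve_for_diagonal'[OF units(5,2,4) ptolemy_iv[OF cr] tri_k'] .
      ultimately show ?thesis unfolding factored unfolding orient_def by (auto simp: algebra_simps)
    qed
  qed
qed

section \<open>Gluing along a diagonal\<close>

lemma ptolemy_at_endpoint:
  fixes c :: "'v \<times> 'v \<Rightarrow> 'a::ring_1"
  assumes "c (j,j) = 0" "c (l,l) = 0" "runit (c (l,j))" "runit (c (j,l))"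
    and "i = j \<or> i = l \<or> k = j \<or> k = l"
  shows "c (i,k) = ptolemy c i k j l"
  using assms by (auto simp: mult.assoc)

text \<open>Re-expanding the row \<open>(c(i,t), c(i,v))\<close> or the column \<open>(c(v,k), c(t,k))\<close> of the relation for
  \<open>(t,v)\<close> along \<open>(t',v')\<close>; as before \<open>cxy\<close> stands for \<open>c(x,y)\<close>, and \<open>T, V, X, Y\<close> for the inverses
  of \<open>c(v,t), c(t,v), c(v',t'), c(t',v')\<close>.\<close>

lemma ptolemy_transfer_row:
  fixes cik cit T cvk civ V ctk cv'k cv't cv'v ct'k ct't ct'v cit' X civ' Y :: "'a::ring_1"
  assumes "cik = cit * T * cvk + civ * V * ctk"
    and "cit = cit' * X * cv't + civ' * Y * ct't" "civ = cit' * X * cv'v + civ' * Y * ct'v"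
    and "cv'k = cv't * T * cvk + cv'v * V * ctk" "ct'k = ct't * T * cvk + ct'v * V * ctk"
  shows "cik = cit' * X * cv'k + civ' * Y * ct'k"
  using assms by (simp add: algebra_simps)

lemma ptolemy_transfer_column:
  fixes cik cit T cvk civ V ctk cit' cvt' ctt' civ' cvv' ctv' X cv'k Y ct'k :: "'a::ring_1"
  assumes "cik = cit * T * cvk + civ * V * ctk"
    and "cvk = cvt' * X * cv'k + cvv' * Y * ct'k" "ctk = ctt' * X * cv'k + ctv' * Y * ct'k"
    and "cit' = cit * T * cvt' + civ * V * ctt'" "civ' = cit * T * cvv' + civ * V * ctv'"
  shows "cik = cit' * X * cv'k + civ' * Y * ct'k"
  using assms by (simp add: algebra_simps)

lemma weak_frieze_ptolemy:
  fixes c :: "'v::linorder \<times> 'v \<Rightarrow> 'a::ring_1"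
  assumes wf: "weak_frieze X D c" and D: "(j,l) \<in> D" "(l,j) \<in> D" and zero: "\<And>x. c (x,x) = 0"
    and ab: "a \<in> X" "b \<in> X" "a = j \<or> a = l \<or> b = j \<or> b = l \<or> crosses (a,b) (j,l)"
  shows "c (a,b) = ptolemy c a b j l"
proof (cases "crosses (a,b) (j,l)")
  case True
  then show ?thesis using wf D ab(1,2) unfolding weak_frieze_def by blast
next
  case False
  have "runit (c (j,l))" "runit (c (l,j))" using wf D unfolding weak_frieze_def by auto
  then show ?thesis using False ab(3) zero by (intro ptolemy_at_endpoint) auto
qed

lemma ptolemy_between_sides:
  fixes c :: "'v::linorder \<times> 'v \<Rightarrow> 'a::ring_1"
  assumes tv: "t \<noteq> v" and zero: "\<And>x. c (x,x) = 0" and units: "runit (c (t,v))" "runit (c (v,t))"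
    and cross: "\<And>i k. i \<in> P \<Longrightarrow> k \<in> P \<Longrightarrow> crosses (i,k) (t,v) \<Longrightarrow> c (i,k) = ptolemy c i k t v"
    and ab: "a \<in> P" "b \<in> P" "a \<in> arc t v P \<or> b \<in> arc t v P" "\<not> (a \<in> arc t v P \<and> b \<in> arc t v P)"
  shows "c (a,b) = ptolemy c a b t v"
proof (cases "crosses (a,b) (t,v)")
  case True
  then show ?thesis using cross ab(1,2) by blast
next
  case False
  then have "a \<in> arc v t P \<and> b \<in> arc v t P"
    using crosses_iff_not_same_arc[OF ab(1,2) tv] ab(4) by blast
  then have "a = t \<or> a = v \<or> b = t \<or> b = v" using ab(3) arc_inter by blast
  then show ?thesis using zero units by (intro ptolemy_at_endpoint) auto
qed

text \<open>A diagonal \<open>(t',v')\<close> of one side of \<open>(t,v)\<close> that is crossed by a diagonal leaving that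
  side is also crossed by \<open>(t,v)\<close>; expanding along \<open>(t,v)\<close> and then along \<open>(t',v')\<close> inside the
  side gives the relation for \<open>(t',v')\<close>.\<close>

lemma ptolemy_across_arc:
  fixes c :: "'v::linorder \<times> 'v \<Rightarrow> 'a::ring_1"
  assumes tv: "t \<in> P" "v \<in> P" "t \<noteq> v"
    and zero: "\<And>x. c (x,x) = 0" and units: "runit (c (t,v))" "runit (c (v,t))"
    and cross: "\<And>i k. i \<in> P \<Longrightarrow> k \<in> P \<Longrightarrow> crosses (i,k) (t,v) \<Longrightarrow> c (i,k) = ptolemy c i k t v"
    and wf: "weak_frieze (arc t v P) E1 c" and E1: "(t',v') \<in> E1" "(v',t') \<in> E1"
    and t'v': "t' \<in> arc t v P" "v' \<in> arc t v P"
    and ik: "i \<in> P" "k \<in> P" "crosses (i,k) (t',v')"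
  shows "c (i,k) = ptolemy c i k t' v'"
proof -
  let ?P1 = "arc t v P"
  note inner = weak_frieze_ptolemy[OF wf E1 zero]
  note outer = ptolemy_between_sides[OF tv(3) zero units cross]
  have tvP1: "t \<in> ?P1" "v \<in> ?P1" using endpoints_mem_arc tv by auto
  show ?thesis
  proof (cases "i \<in> ?P1 \<and> k \<in> ?P1")
    case True
    then show ?thesis using inner ik by blast
  next
    case False
    have cr: "crosses (i,k) (t,v)" by (rule crosses_chord_in_arc[OF t'v' ik(1,2) tv(3) ik(3) False])
    have "i \<in> ?P1 \<or> k \<in> ?P1"
      using arc_cover[OF tv(3) ik(1)] arc_cover[OF tv(3) ik(2)] cr
        crosses_iff_not_same_arc[OF ik(1,2) tv(3)] by blast
    then have "i \<in> ?P1 \<and> k \<notin> ?P1 \<or> k \<in> ?P1 \<and> i \<notin> ?P1" using False by blast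
    then show ?thesis
    proof
      assume side: "i \<in> ?P1 \<and> k \<notin> ?P1"
      have "crosses (i,x) (t',v')" if "x = t \<or> x = v" "x \<noteq> t'" "x \<noteq> v'" for x
        using crosses_replace_outside[OF t'v' ik(2) _ that ik(3)] side by blast
      then have "c (i,t) = ptolemy c i t t' v'" "c (i,v) = ptolemy c i v t' v'"
        using side tvP1 by (auto intro!: inner)
      moreover have "c (v',k) = ptolemy c v' k t v" "c (t',k) = ptolemy c t' k t v"
        using side t'v' ik arc_subset by (auto intro!: outer)
      ultimately show ?thesis by (rule ptolemy_transfer_row[OF cross[OF ik(1,2) cr]])
    next
      assume side: "k \<in> ?P1 \<and> i \<notin> ?P1"
      have "crosses (x,k) (t',v')" if "x = t \<or> x = v" "x \<noteq> t'" "x \<noteq> v'" for x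
        using crosses_replace_outside[OF t'v' ik(1) _ that] ik(3) side
        by (metis crosses_swap_left)
      then have "c (v,k) = ptolemy c v k t' v'" "c (t,k) = ptolemy c t k t' v'"
        using side tvP1 by (auto intro!: inner)
      moreover have "c (i,t') = ptolemy c i t' t v" "c (i,v') = ptolemy c i v' t v"
        using side t'v' ik arc_subset by (auto intro!: outer)
      ultimately show ?thesis by (rule ptolemy_transfer_column[OF cross[OF ik(1,2) cr]])
    qed
  qed
qed

lemma ptolemy_reverse_diagonal:
  "(\<And>i k. i \<in> P \<Longrightarrow> k \<in> P \<Longrightarrow> crosses (i,k) (t,v) \<Longrightarrow> c (i,k) = ptolemy c i k t v) \<Longrightarrow>
    i \<in> P \<Longrightarrow> k \<in> P \<Longrightarrow> crosses (i,k) (v,t) \<Longrightarrow> c (i,k) = ptolemy c i k v t"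
  using crosses_swap_right ptolemy_swap by metis

lemma weak_frieze_glue:
  fixes c :: "'v::linorder \<times> 'v \<Rightarrow> 'a::ring_1"
  assumes tv: "t \<in> P" "v \<in> P" "t \<noteq> v"
    and E: "(t,v) \<in> E" "(v,t) \<in> E" "E \<subseteq> diag (arc t v P) \<union> diag (arc v t P)"
    and wf1: "weak_frieze (arc t v P) (arc_dissection t v P E) c"
    and wf2: "weak_frieze (arc v t P) (arc_dissection v t P E) c"
    and zero: "\<And>x. c (x,x) = 0" and units: "runit (c (t,v))" "runit (c (v,t))"
    and cross: "\<And>i k. i \<in> P \<Longrightarrow> k \<in> P \<Longrightarrow> crosses (i,k) (t,v) \<Longrightarrow> c (i,k) = ptolemy c i k t v"
  shows "weak_frieze P E c"
  unfolding weak_frieze_def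
proof (intro conjI ballI allI impI)
  fix d assume "d \<in> E"
  then consider "d \<in> arc_dissection t v P E" | "d \<in> arc_dissection v t P E" | "d = (t,v)" | "d = (v,t)"
    using E unfolding arc_dissection_def by blast
  then show "runit (c d)"
    using wf1 wf2 units unfolding weak_frieze_def by cases auto
next
  fix i k t' v'
  assume ik: "i \<in> P" "k \<in> P" and h: "(t',v') \<in> E \<and> (v',t') \<in> E \<and> crosses (i,k) (t',v')"
  have diag_sym: "(v',t') \<in> diag X" if "(t',v') \<in> diag X" for X
    using that unfolding diag_def by auto
  consider "(t',v') = (t,v)" | "(t',v') = (v,t)" | "(t',v') \<in> arc_dissection t v P E" "(v',t') \<in> arc_dissection t v P E"
    | "(t',v') \<in> arc_dissection v t P E" "(v',t') \<in> arc_dissection v t P E"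
    using h E diag_sym unfolding arc_dissection_def by blast
  then show "c (i,k) = ptolemy c i k t' v'"
  proof cases
    case 1
    then show ?thesis using cross ik h by auto
  next
    case 2
    then show ?thesis using ptolemy_reverse_diagonal[of P t v c, OF cross] ik h by auto
  next
    case 3
    then have "t' \<in> arc t v P" "v' \<in> arc t v P" unfolding arc_dissection_def diag_def by auto
    with 3 show ?thesis using ptolemy_across_arc[OF tv zero units cross wf1] ik h by blast
  next
    case 4
    then have "t' \<in> arc v t P" "v' \<in> arc v t P" unfolding arc_dissection_def diag_def by auto
    with 4 show ?thesis
      using ptolemy_across_arc[OF tv(2,1) tv(3)[symmetric] zero units(2,1)
          ptolemy_reverse_diagonal[of P t v c, OF cross] wf2] ik h
      by blast
  qed
qed

lemma frieze_on_common_arc: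
  assumes tv: "t \<in> P" "v \<in> P" "t \<noteq> v" and fr: "frieze (arc t v P) c" "frieze (arc v t P) c"
    and xy: "x \<in> P" "y \<in> P" "\<not> crosses (x,y) (t,v)"
  obtains X where "frieze X c" "t \<in> X" "v \<in> X" "x \<in> X" "y \<in> X"
proof -
  have "x \<in> arc t v P \<and> y \<in> arc t v P \<or> x \<in> arc v t P \<and> y \<in> arc v t P"
    using crosses_iff_not_same_arc[OF xy(1,2) tv(3)] xy(3) by blast
  then show ?thesis
    using that fr endpoints_mem_arc[OF tv(1,2)] endpoints_mem_arc[OF tv(2,1)] by blast
qed

lemma factorization_glue:
  fixes c :: "'v::linorder \<times> 'v \<Rightarrow> 'a::ring_1"
  assumes tv: "t \<in> P" "v \<in> P" "t \<noteq> v"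
    and fr: "frieze (arc t v P) c" "frieze (arc v t P) c"
    and units: "\<And>a b. a \<in> P \<Longrightarrow> b \<in> P \<Longrightarrow> a \<noteq> b \<Longrightarrow> runit (c (a,b))"
    and cross: "crosses (i,k) (t,v) \<Longrightarrow> c (i,k) = ptolemy c i k t v"
    and ik: "i \<in> P" "k \<in> P" "i \<noteq> k" "i \<noteq> t" "k \<noteq> t"
  shows "c (i,k) = factorization c t v i k"
proof (rule factorization_pair)
  have not_cross_t: "\<not> crosses (x,t) (t,v)" for x using crosses_distinct by fastforce
  obtain Xi where Xi: "frieze Xi c" "t \<in> Xi" "v \<in> Xi" "i \<in> Xi"
    using frieze_on_common_arc[OF tv fr ik(1) tv(1) not_cross_t] by blast
  obtain Xk where Xk: "frieze Xk c" "t \<in> Xk" "v \<in> Xk" "k \<in> Xk"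
    using frieze_on_common_arc[OF tv fr ik(2) tv(1) not_cross_t] by blast
  show "t \<noteq> v" "i \<noteq> k" "i \<noteq> t" "k \<noteq> t" using tv ik by auto
  show "runit (c (v,t))" "runit (c (t,v))" "runit (c (t,i))" "runit (c (t,k))" "runit (c (k,t))"
    "k \<noteq> v \<Longrightarrow> runit (c (k,v))" "k \<noteq> v \<Longrightarrow> runit (c (v,k))"
    using units tv ik by auto
  show "i \<noteq> v \<Longrightarrow> triangle c i t v = triangle c i v t"
    using frieze_triangle[OF Xi(1,4,2,3)] tv ik by auto
  show "k \<noteq> v \<Longrightarrow> triangle c k t v = triangle c k v t"
    using frieze_triangle[OF Xk(1,4,2,3)] tv ik by auto
  show "crosses (i,k) (t,v) \<Longrightarrow> c (i,k) = ptolemy c i k t v" by (rule cross)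
  show "c (i,t) = ptolemy c i t v k" if cr: "crosses (i,t) (v,k)"
  proof -
    obtain X where "frieze X c" "t \<in> X" "v \<in> X" "i \<in> X" "k \<in> X"
      using frieze_on_common_arc[OF tv fr ik(1,2)] cr crosses_excludes_other_pairings by blast
    then show ?thesis using frieze_ptolemy cr by blast
  qed
  show "c (i,v) = ptolemy c i v k t" if cr: "crosses (i,v) (k,t)"
  proof -
    obtain X where "frieze X c" "t \<in> X" "v \<in> X" "i \<in> X" "k \<in> X"
      using frieze_on_common_arc[OF tv fr ik(1,2)] cr crosses_excludes_other_pairings by blast
    then show ?thesis using frieze_ptolemy cr by blast
  qed
qed

lemma frieze_glue:
  fixes c :: "'v::linorder \<times> 'v \<Rightarrow> 'a::ring_1"
  assumes tv: "t \<in> P" "v \<in> P" "t \<noteq> v"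
    and fr: "frieze (arc t v P) c" "frieze (arc v t P) c"
    and units: "\<forall>d\<in>diag P. runit (c d)"
    and cross: "\<And>i k. i \<in> P \<Longrightarrow> k \<in> P \<Longrightarrow> crosses (i,k) (t,v) \<Longrightarrow> c (i,k) = ptolemy c i k t v"
  shows "frieze P c"
proof (rule frieze_factorized[where t = t and lam = "lam_of c t v" and mu = "mu_of c t v" and z = "z_of c t v"])
  have U: "runit (c (a,b))" if "a \<in> P" "b \<in> P" "a \<noteq> b" for a b
    using units that unfolding diag_def by auto
  show "runit (lam_of c t v i)" "runit (mu_of c t v i)" if "i \<in> P" for i
    using U tv that unfolding lam_of_def mu_of_def by auto
  show "runit (c (i,k))" if "i \<in> P" "k \<in> P" "i \<noteq> k" for i k
    using U that by blast
  fix i k assume ik: "i \<in> P" "k \<in> P" "i \<noteq> k"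
  consider "i = t" | "k = t" | "i \<noteq> t" "k \<noteq> t" by blast
  then show "c (i,k) = factorization c t v i k"
  proof cases
    case 1
    then show ?thesis using factorization_at_t(2)[of c v t k] U tv ik by auto
  next
    case 2
    then show ?thesis using factorization_at_t(1)[of c v t i] U tv ik by auto
  next
    case 3
    then show ?thesis using factorization_glue[OF tv fr U cross] ik by blast
  qed
qed

text \<open>It vanishes on the
  diagonal, which makes the relations for degenerate quadrilaterals hold trivially.\<close>

definition glue :: "'v::linorder \<Rightarrow> 'v \<Rightarrow> 'v set \<Rightarrow> ('v \<times> 'v \<Rightarrow> 'a::ring_1) \<Rightarrow> ('v \<times> 'v \<Rightarrow> 'a) \<Rightarrow> 'v \<times> 'v \<Rightarrow> 'a"
  where "glue t v P c1 c2 =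
    (let c0 = (\<lambda>(i,k). if i = k then 0 else if i \<in> arc t v P \<and> k \<in> arc t v P then c1 (i,k) else c2 (i,k))
     in (\<lambda>(i,k). if crosses (i,k) (t,v) then ptolemy c0 i k t v else c0 (i,k)))"

lemma glue_same [simp]: "glue t v P c1 c2 (x,x) = 0"
  unfolding glue_def Let_def crosses_def by simp

lemma glue_arc1:
  assumes "i \<in> arc t v P" "k \<in> arc t v P" "i \<noteq> k" "t \<noteq> v"
  shows "glue t v P c1 c2 (i,k) = c1 (i,k)"
proof -
  have "\<not> crosses (i,k) (t,v)"
    using assms crosses_iff_not_same_arc[of i P k t v] arc_subset by blast
  then show ?thesis using assms unfolding glue_def Let_def by simp
qed

lemma glue_arc2:
  assumes "i \<in> arc v t P" "k \<in> arc v t P" "i \<noteq> k" "t \<noteq> v"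
    and "c1 (t,v) = c2 (t,v)" "c1 (v,t) = c2 (v,t)"
  shows "glue t v P c1 c2 (i,k) = c2 (i,k)"
proof -
  have "\<not> crosses (i,k) (t,v)"
    using assms crosses_iff_not_same_arc[of i P k t v] arc_subset by blast
  moreover have "c1 (i,k) = c2 (i,k)" if "i \<in> arc t v P" "k \<in> arc t v P"
    using that assms arc_inter by metis
  ultimately show ?thesis using assms unfolding glue_def Let_def by auto
qed

lemma glue_crosses:
  assumes "crosses (i,k) (t,v)"
  shows "glue t v P c1 c2 (i,k) = ptolemy (glue t v P c1 c2) i k t v"
proof -
  have "\<not> crosses (a,b) (t,v)" if "a = t \<or> a = v \<or> b = t \<or> b = v" for a b
    using that crosses_distinct by fastforce
  then show ?thesis using assms unfolding glue_def Let_def by simp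
qed

section \<open>Gluing friezes on the pieces of a dissection\<close>

lemma frieze_cong:
  assumes "frieze P c'" "\<And>i k. i \<in> P \<Longrightarrow> k \<in> P \<Longrightarrow> i \<noteq> k \<Longrightarrow> c (i,k) = c' (i,k)"
  shows "frieze P c"
proof -
  have "c (i,k) = c' (i,k)" if "i \<in> P" "k \<in> P" "i \<noteq> k" for i k using assms(2) that .
  moreover have "d \<in> diag P \<Longrightarrow> c d = c' d" for d using assms(2) unfolding diag_def by auto
  ultimately show ?thesis using assms(1) unfolding frieze_def crosses_def Let_def
    by (auto simp: distinct_length_2_or_more)
qed

lemma weak_frieze_cong:
  assumes "weak_frieze P E c'" "E \<subseteq> diag P"
    and "\<And>i k. i \<in> P \<Longrightarrow> k \<in> P \<Longrightarrow> i \<noteq> k \<Longrightarrow> c (i,k) = c' (i,k)"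
  shows "weak_frieze P E c"
proof -
  have "d \<in> diag P \<Longrightarrow> c d = c' d" for d using assms(3) unfolding diag_def by auto
  then show ?thesis using assms unfolding weak_frieze_def crosses_def Let_def diag_def
    by (auto simp: distinct_length_2_or_more)
qed

lemma weak_frieze_mono: "weak_frieze P E c \<Longrightarrow> P' \<subseteq> P \<Longrightarrow> E' \<subseteq> E \<Longrightarrow> weak_frieze P' E' c"
  unfolding weak_frieze_def by blast

lemma is_edge_in_piece:
  assumes "polygon P" "dissection P E" "is_edge P d"
  shows "\<exists>Q. piece P E Q \<and> d \<in> diag Q"
  using assms
proof (induction arbitrary: d rule: dissection_induct)
  case (undissected P)
  then show ?case using piece_whole unfolding is_edge_def by blast
next
  case (split P E t v)
  note tv = dissection_diagonal[OF split.hyps(2,3)]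
  have "\<not> crosses d (t,v)" using is_edge_not_crosses[of P "fst d" "snd d"] split.prems tv by simp
  then have "d \<in> diag (arc t v P) \<or> d \<in> diag (arc v t P)"
    using diag_in_arc[of "fst d" "snd d"] split.prems tv(3) unfolding is_edge_def by simp
  then show ?case
    using split.IH is_edge_subset[OF split.prems arc_subset] piece_of_arc[OF split.hyps(2,3)]
      piece_of_arc[OF split.hyps(2) dissection_sym[OF split.hyps(2,3)]] by meson
qed

lemma weak_frieze_unique:
  assumes "polygon P" "dissection P E"
    and "weak_frieze P E c" "weak_frieze P E c'"
    and "\<And>Q. piece P E Q \<Longrightarrow> \<forall>d\<in>diag Q. c d = c' d"
  shows "\<forall>d\<in>diag P. c d = c' d"
  using assms
proof (induction rule: dissection_induct)
  case (undissected P)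
  then show ?case using piece_whole by blast
next
  case (split P E t v)
  note tv = dissection_diagonal[OF split.hyps(2,3)]
  have vt: "(v,t) \<in> E" by (rule dissection_sym[OF split.hyps(2,3)])
  have arc1: "\<forall>d\<in>diag (arc t v P). c d = c' d"
    using weak_frieze_mono[OF _ arc_subset arc_dissection_subset] split.prems
      piece_of_arc[OF split.hyps(2,3)] by (intro split.IH(1)) blast+
  have arc2: "\<forall>d\<in>diag (arc v t P). c d = c' d"
    using weak_frieze_mono[OF _ arc_subset arc_dissection_subset] split.prems
      piece_of_arc[OF split.hyps(2) vt] by (intro split.IH(2)) blast+
  have endpoint: "c (a,b) = c' (a,b)" if "a \<in> P" "b \<in> P" "a \<noteq> b" "a \<in> {t,v} \<or> b \<in> {t,v}" for a b
    using that arc1 arc2 arc_cover[OF tv(3)] endpoints_mem_arc[OF tv(1,2)] endpoints_mem_arc[OF tv(2,1)]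
    unfolding diag_def by blast
  show ?case
  proof
    fix d assume d: "d \<in> diag P"
    show "c d = c' d"
    proof (cases "crosses d (t,v)")
      case False
      then show ?thesis using diag_in_arc[of "fst d" "snd d" P t v] d tv(3) arc1 arc2 by auto
    next
      case True
      obtain i k where ik: "d = (i,k)" "i \<in> P" "k \<in> P" using d unfolding diag_def by auto
      have "c (i,k) = ptolemy c i k t v" "c' (i,k) = ptolemy c' i k t v"
        using split.prems(1,2) split.hyps(3) vt True ik unfolding weak_frieze_def by auto
      moreover have "i \<noteq> t" "i \<noteq> v" "k \<noteq> t" "k \<noteq> v"
        using crosses_distinct True ik(1) by auto
      ultimately show ?thesis using endpoint ik tv by simp
    qed
  qed
qed

definition compatible_friezes :: "'v::linorder set \<Rightarrow> ('v \<times> 'v) set \<Rightarrow> ('v set \<Rightarrow> 'v \<times> 'v \<Rightarrow> 'a::ring_1) \<Rightarrow> bool"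
  where "compatible_friezes P E cs \<longleftrightarrow> (\<forall>Q. piece P E Q \<longrightarrow> frieze Q (cs Q))
    \<and> (\<forall>Q Q' d. piece P E Q \<longrightarrow> piece P E Q' \<longrightarrow> d \<in> E \<longrightarrow> d \<in> diag Q \<longrightarrow> d \<in> diag Q' \<longrightarrow> cs Q d = cs Q' d)"

definition gluing :: "'v::linorder set \<Rightarrow> ('v \<times> 'v) set \<Rightarrow> ('v set \<Rightarrow> 'v \<times> 'v \<Rightarrow> 'a::ring_1) \<Rightarrow> ('v \<times> 'v \<Rightarrow> 'a) \<Rightarrow> bool"
  where "gluing P E cs c \<longleftrightarrow> (\<forall>Q. piece P E Q \<longrightarrow> (\<forall>d\<in>diag Q. c d = cs Q d)) \<and> weak_frieze P E c
    \<and> ((\<forall>d\<in>diag P. runit (c d)) \<longrightarrow> frieze P c)"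

lemma compatible_friezes_arc:
  assumes dis: "dissection P E" and tvE: "(t,v) \<in> E" and cs: "compatible_friezes P E cs"
  shows "compatible_friezes (arc t v P) (arc_dissection t v P E) cs"
  unfolding compatible_friezes_def
proof (intro conjI allI impI)
  fix Q assume "piece (arc t v P) (arc_dissection t v P E) Q"
  then show "frieze Q (cs Q)" using cs piece_of_arc[OF dis tvE] unfolding compatible_friezes_def by blast
next
  fix Q Q' d
  assume "piece (arc t v P) (arc_dissection t v P E) Q" "piece (arc t v P) (arc_dissection t v P E) Q'"
    and "d \<in> arc_dissection t v P E" "d \<in> diag Q" "d \<in> diag Q'"
  then show "cs Q d = cs Q' d"
    using cs piece_of_arc[OF dis tvE] arc_dissection_subset unfolding compatible_friezes_def by blast
qed

lemma gluings_agree_on_diagonal: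
  assumes pol: "polygon P" and dis: "dissection P E" and tvE: "(t,v) \<in> E"
    and cs: "compatible_friezes P E cs"
    and c1: "gluing (arc t v P) (arc_dissection t v P E) cs c1"
    and c2: "gluing (arc v t P) (arc_dissection v t P E) cs c2"
  shows "c1 (t,v) = c2 (t,v)" "c1 (v,t) = c2 (v,t)" "runit (c1 (t,v))" "runit (c1 (v,t))"
proof -
  note tv = dissection_diagonal[OF dis tvE]
  have vt: "(v,t) \<in> E" by (rule dissection_sym[OF dis tvE])
  note pieces = piece_of_arc[OF dis tvE] piece_of_arc[OF dis vt]
  obtain Q1 where Q1: "piece (arc t v P) (arc_dissection t v P E) Q1" "(t,v) \<in> diag Q1" "(v,t) \<in> diag Q1"
    using is_edge_in_piece[OF polygon_arc dissection_arc is_edge_arc_endpoints(1)] pol dis tvE tv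
    unfolding diag_def by blast
  obtain Q2 where Q2: "piece (arc v t P) (arc_dissection v t P E) Q2" "(t,v) \<in> diag Q2" "(v,t) \<in> diag Q2"
    using is_edge_in_piece[OF polygon_arc dissection_arc is_edge_arc_endpoints(1)] pol dis vt tv
    unfolding diag_def by blast
  have c1_Q1: "c1 d = cs Q1 d" if "d \<in> diag Q1" for d using c1 Q1(1) that unfolding gluing_def by blast
  have c2_Q2: "c2 d = cs Q2 d" if "d \<in> diag Q2" for d using c2 Q2(1) that unfolding gluing_def by blast
  have "cs Q1 d = cs Q2 d" if "d \<in> E" "d \<in> diag Q1" "d \<in> diag Q2" for d
    using cs pieces(1)[OF Q1(1)] pieces(2)[OF Q2(1)] that unfolding compatible_friezes_def by blast
  then show "c1 (t,v) = c2 (t,v)" "c1 (v,t) = c2 (v,t)"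
    using c1_Q1 c2_Q2 Q1 Q2 tvE vt by simp_all
  have "frieze Q1 (cs Q1)" using cs pieces(1)[OF Q1(1)] unfolding compatible_friezes_def by blast
  moreover have "t \<in> Q1" "v \<in> Q1" using Q1(2) unfolding diag_def by auto
  ultimately have "runit (cs Q1 (t,v))" "runit (cs Q1 (v,t))" using frieze_runit tv(3) by auto
  then show "runit (c1 (t,v))" "runit (c1 (v,t))" using c1_Q1 Q1(2,3) by simp_all
qed

lemma glue_on_pieces:
  assumes pol: "polygon P" and dis: "dissection P E" and tvE: "(t,v) \<in> E"
    and c1: "\<And>Q. piece (arc t v P) (arc_dissection t v P E) Q \<Longrightarrow> \<forall>d\<in>diag Q. c1 d = cs Q d"
    and c2: "\<And>Q. piece (arc v t P) (arc_dissection v t P E) Q \<Longrightarrow> \<forall>d\<in>diag Q. c2 d = cs Q d"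
    and agree: "c1 (t,v) = c2 (t,v)" "c1 (v,t) = c2 (v,t)"
    and pc: "piece P E Q"
  shows "\<forall>d\<in>diag Q. glue t v P c1 c2 d = cs Q d"
proof
  fix d assume d: "d \<in> diag Q"
  then obtain a b where ab: "d = (a,b)" "a \<in> Q" "b \<in> Q" "a \<noteq> b" unfolding diag_def by auto
  note tv = dissection_diagonal[OF dis tvE]
  from piece_subset_arc[OF pol dis tvE pc] show "glue t v P c1 c2 d = cs Q d"
  proof
    assume Q: "Q \<subseteq> arc t v P"
    then have "glue t v P c1 c2 (a,b) = c1 (a,b)" using glue_arc1 ab tv(3) by blast
    then show ?thesis using c1[OF piece_in_arc[OF dis tvE pc Q]] d ab(1) by simp
  next
    assume Q: "Q \<subseteq> arc v t P"
    then have "glue t v P c1 c2 (a,b) = c2 (a,b)" using glue_arc2 ab tv(3) agree by blast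
    then show ?thesis using c2[OF piece_in_arc[OF dis dissection_sym[OF dis tvE] pc Q]] d ab(1) by simp
  qed
qed

lemma gluing_glue:
  fixes c1 c2 :: "'v::linorder \<times> 'v \<Rightarrow> 'a::ring_1"
  assumes pol: "polygon P" and dis: "dissection P E" and tvE: "(t,v) \<in> E"
    and c1: "gluing (arc t v P) (arc_dissection t v P E) cs c1"
    and c2: "gluing (arc v t P) (arc_dissection v t P E) cs c2"
    and agree: "c1 (t,v) = c2 (t,v)" "c1 (v,t) = c2 (v,t)"
    and units: "runit (c1 (t,v))" "runit (c1 (v,t))"
  shows "gluing P E cs (glue t v P c1 c2)"
proof -
  note tv = dissection_diagonal[OF dis tvE]
  have vt: "(v,t) \<in> E" by (rule dissection_sym[OF dis tvE])
  define c where "c = glue t v P c1 c2"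
  have on1: "c (i,k) = c1 (i,k)" if "i \<in> arc t v P" "k \<in> arc t v P" "i \<noteq> k" for i k
    using glue_arc1 that tv(3) unfolding c_def by blast
  have on2: "c (i,k) = c2 (i,k)" if "i \<in> arc v t P" "k \<in> arc v t P" "i \<noteq> k" for i k
    using glue_arc2 that tv(3) agree unfolding c_def by blast
  have cross: "c (i,k) = ptolemy c i k t v" if "crosses (i,k) (t,v)" for i k
    using glue_crosses that unfolding c_def by blast
  have ext: "\<forall>d\<in>diag Q. c d = cs Q d" if "piece P E Q" for Q
    using glue_on_pieces[OF pol dis tvE _ _ agree that] c1 c2 unfolding gluing_def c_def by blast
  have units': "runit (c (t,v))" "runit (c (v,t))"
    using units on1 endpoints_mem_arc[OF tv(1,2)] tv(3) by auto
  have "weak_frieze P E c"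
  proof (rule weak_frieze_glue[OF tv(1-3) tvE vt dissection_subset_arcs[OF dis tvE] _ _ _ units' cross])
    show "weak_frieze (arc t v P) (arc_dissection t v P E) c"
      using c1 weak_frieze_cong on1 unfolding gluing_def arc_dissection_def by blast
    show "weak_frieze (arc v t P) (arc_dissection v t P E) c"
      using c2 weak_frieze_cong on2 unfolding gluing_def arc_dissection_def by blast
    show "c (x,x) = 0" for x unfolding c_def by simp
  qed
  moreover have "frieze P c" if U: "\<forall>d\<in>diag P. runit (c d)"
  proof (rule frieze_glue[OF tv(1-3) _ _ U cross])
    have "\<forall>d\<in>diag (arc t v P). runit (c1 d)"
      using U on1 arc_subset unfolding diag_def by fastforce
    then show "frieze (arc t v P) c" using c1 frieze_cong on1 unfolding gluing_def by blast
    have "\<forall>d\<in>diag (arc v t P). runit (c2 d)"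
      using U on2 arc_subset unfolding diag_def by fastforce
    then show "frieze (arc v t P) c" using c2 frieze_cong on2 unfolding gluing_def by blast
  qed
  ultimately show ?thesis using ext unfolding gluing_def c_def by blast
qed

lemma gluing_exists:
  assumes "polygon P" "dissection P E" "compatible_friezes P E cs"
  shows "\<exists>c. gluing P E cs c"
  using assms
proof (induction rule: dissection_induct)
  case (undissected P)
  then have "piece P {} Q \<longleftrightarrow> Q = P" for Q using piece_whole piece_undissected by blast
  then show ?case using undissected.prems unfolding gluing_def compatible_friezes_def weak_frieze_def
    by auto
next
  case (split P E t v)
  have vt: "(v,t) \<in> E" by (rule dissection_sym[OF split.hyps(2,3)])
  obtain c1 where c1: "gluing (arc t v P) (arc_dissection t v P E) cs c1"
    using split.IH(1) compatible_friezes_arc[OF split.hyps(2,3) split.prems] by blast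
  obtain c2 where c2: "gluing (arc v t P) (arc_dissection v t P E) cs c2"
    using split.IH(2) compatible_friezes_arc[OF split.hyps(2) vt split.prems] by blast
  show ?case
    using gluing_glue[OF split.hyps c1 c2 gluings_agree_on_diagonal[OF split.hyps split.prems c1 c2]]
    by blast
qed

theorem theoremD:
  fixes P :: "'v::linorder set" and E :: "('v \<times> 'v) set"
    and cs :: "'v set \<Rightarrow> ('v \<times> 'v \<Rightarrow> 'a::ring_1)"
  assumes "polygon P"
    and "dissection P E"
    and "\<And>Q. piece P E Q \<Longrightarrow> frieze Q (cs Q)"
    and "\<And>Q Q' t v. piece P E Q \<Longrightarrow> piece P E Q' \<Longrightarrow> (t, v) \<in> E
           \<Longrightarrow> (t, v) \<in> diag Q \<Longrightarrow> (t, v) \<in> diag Q' \<Longrightarrow> cs Q (t, v) = cs Q' (t, v)"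
  shows "\<exists>c :: 'v \<times> 'v \<Rightarrow> 'a.
           (\<forall>Q. piece P E Q \<longrightarrow> (\<forall>d\<in>diag Q. c d = cs Q d))
         \<and> weak_frieze P E c
         \<and> (\<forall>c' :: 'v \<times> 'v \<Rightarrow> 'a.
               (\<forall>Q. piece P E Q \<longrightarrow> (\<forall>d\<in>diag Q. c' d = cs Q d)) \<and> weak_frieze P E c'
               \<longrightarrow> (\<forall>d\<in>diag P. c' d = c d))
         \<and> ((\<forall>d\<in>diag P. runit (c d)) \<longrightarrow> frieze P c)"
proof -
  have "compatible_friezes P E cs"
    unfolding compatible_friezes_def
  proof (intro conjI allI impI)
    fix Q assume "piece P E Q"
    then show "frieze Q (cs Q)" by (rule assms(3))
  next
    fix Q Q' d assume "piece P E Q" "piece P E Q'" "d \<in> E" "d \<in> diag Q" "d \<in> diag Q'"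
    then show "cs Q d = cs Q' d" using assms(4)[of Q Q' "fst d" "snd d"] by simp
  qed
  then obtain c where c: "gluing P E cs c" using gluing_exists[OF assms(1,2)] by blast
  have "\<forall>d\<in>diag P. c' d = c d"
    if "(\<forall>Q. piece P E Q \<longrightarrow> (\<forall>d\<in>diag Q. c' d = cs Q d)) \<and> weak_frieze P E c'" for c'
    using weak_frieze_unique[OF assms(1,2), of c' c] that c unfolding gluing_def by simp
  with c show ?thesis unfolding gluing_def by blast
qed

end
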